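(* Let $S\subset\mathbb{R}^2$ be a finite set in general position and let $a,b\in S$. If $ab$ is an exit edge of $S$ with two distinct witnesses $c,d\in S$, then in the dual arrangement $\mathcal{A}$ of $S^*$ the two unmarked triangular cells bounded by $a^*,b^*,c^*$ and by $a^*,b^*,d^*$ both have exit vertex $a^*\cap b^*$, i.e. they form an hourglass.
   Context: General position: no three points collinear. For distinct $a,b,c\in S$, $ab$ is an exit edge with witness $c$ if there is no $p\in S$ such that the line through $a$ and $p$ strictly separates $b$ from $c$, and no $p\in S$ such that the line through $b$ and $p$ strictly separates $a$ from $c$. Duality: $p=(p_x,p_y)\mapsto p^*: y=p_xx-p_y$, lines in the projective plane $\mathbb{P}^2$; $\mathcal{A}$ is the arrangement of $S^*=\{s^*:s\in S\}$. The marked cell is the cell containing the vertical point at infinity. Lines are oriented in the direction of increasing $x$; for an unmarked triangular cell, the exit vertex is the unique vertex at which one incident side is directed into it and the other out of it. An hourglass is a pair of distinct unmarked triangular cells with the same exit vertex. *)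

theory Defs
  imports "HOL-Analysis.Analysis" "HOL-Analysis.Cross3"
begin

type_synonym pt = "real \<times> real"

definition orient :: "pt \<Rightarrow> pt \<Rightarrow> pt \<Rightarrow> real" where
  "orient a p x = (fst p - fst a) * (snd x - snd a) - (snd p - snd a) * (fst x - fst a)"

definition general_position :: "pt set \<Rightarrow> bool" where
  "general_position S \<longleftrightarrow> (\<forall>a\<in>S. \<forall>b\<in>S. \<forall>c\<in>S. a \<noteq> b \<and> a \<noteq> c \<and> b \<noteq> c \<longrightarrow> orient a b c \<noteq> 0)"

definition strictly_separates :: "pt \<Rightarrow> pt \<Rightarrow> pt \<Rightarrow> pt \<Rightarrow> bool" where
  "strictly_separates a p x y \<longleftrightarrow> p \<noteq> a \<and> orient a p x * orient a p y < 0"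

definition exit_edge_witness :: "pt set \<Rightarrow> pt \<Rightarrow> pt \<Rightarrow> pt \<Rightarrow> bool" where
  "exit_edge_witness S a b c \<longleftrightarrow>
     a \<in> S \<and> b \<in> S \<and> c \<in> S \<and> a \<noteq> b \<and> a \<noteq> c \<and> b \<noteq> c \<and>
     \<not> (\<exists>p\<in>S. strictly_separates a p b c) \<and>
     \<not> (\<exists>p\<in>S. strictly_separates b p a c)"

(* Projective plane P^2 modelled as the unit sphere of R^3 modulo antipodes.
   Homogeneous coordinates (X,Y,Z) correspond to the affine point (X/Z, Y/Z).
   The dual line p^*: y = p_x x - p_y becomes p_x X - Y - p_y Z = 0. *)
definition dual_normal :: "pt \<Rightarrow> real^3" where
  "dual_normal p = vector [fst p, -1, - snd p]"

definition dline :: "pt \<Rightarrow> (real^3) set" where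
  "dline p = {v \<in> sphere 0 1. dual_normal p \<bullet> v = 0}"

(* A cell of the arrangement of S^*, represented by one of its two antipodal lifts to the sphere *)
definition is_cell :: "pt set \<Rightarrow> (real^3) set \<Rightarrow> bool" where
  "is_cell S C \<longleftrightarrow> C \<in> components (sphere 0 1 - \<Union>(dline ` S))"

(* the marked cell contains the vertical point at infinity (0:1:0) *)
definition marked :: "(real^3) set \<Rightarrow> bool" where
  "marked C \<longleftrightarrow> vector [0, 1, 0] \<in> C \<or> vector [0, -1, 0] \<in> C"

definition tri_cell :: "pt set \<Rightarrow> pt \<Rightarrow> pt \<Rightarrow> pt \<Rightarrow> (real^3) set \<Rightarrow> bool" where
  "tri_cell S a b c C \<longleftrightarrow> is_cell S C \<and>
     C \<in> components (sphere 0 1 - (dline a \<union> dline b \<union> dline c))"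

(* Orientation of p^* by increasing x: at a point w of the great circle dline p the positive
   tangent direction is cross3 w (dual_normal p). *)
definition side_into :: "pt \<Rightarrow> (real^3) set \<Rightarrow> real^3 \<Rightarrow> bool" where
  "side_into p C w \<longleftrightarrow>
     (\<exists>e>0. \<forall>t. 0 < t \<and> t < e \<longrightarrow> sgn (w - t *\<^sub>R cross3 w (dual_normal p)) \<in> closure C)"

definition side_outof :: "pt \<Rightarrow> (real^3) set \<Rightarrow> real^3 \<Rightarrow> bool" where
  "side_outof p C w \<longleftrightarrow>
     (\<exists>e>0. \<forall>t. 0 < t \<and> t < e \<longrightarrow> sgn (w + t *\<^sub>R cross3 w (dual_normal p)) \<in> closure C)"

definition tri_vertex :: "pt \<Rightarrow> pt \<Rightarrow> pt \<Rightarrow> (real^3) set \<Rightarrow> real^3 \<Rightarrow> bool" where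
  "tri_vertex a b c C w \<longleftrightarrow> w \<in> closure C \<and>
     (\<exists>p\<in>{a,b,c}. \<exists>q\<in>{a,b,c}. p \<noteq> q \<and> w \<in> dline p \<and> w \<in> dline q)"

definition exit_vertex_prop :: "pt \<Rightarrow> pt \<Rightarrow> pt \<Rightarrow> (real^3) set \<Rightarrow> real^3 \<Rightarrow> bool" where
  "exit_vertex_prop a b c C w \<longleftrightarrow> w \<in> closure C \<and>
     (\<exists>p\<in>{a,b,c}. \<exists>q\<in>{a,b,c}. p \<noteq> q \<and> w \<in> dline p \<and> w \<in> dline q \<and>
        side_into p C w \<and> side_outof q C w)"

definition unmarked_tri_exit_ab :: "pt set \<Rightarrow> pt \<Rightarrow> pt \<Rightarrow> pt \<Rightarrow> (real^3) set \<Rightarrow> bool" where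
  "unmarked_tri_exit_ab S a b c C \<longleftrightarrow> tri_cell S a b c C \<and> \<not> marked C \<and>
     (\<forall>w. tri_vertex a b c C w \<longrightarrow> (exit_vertex_prop a b c C w \<longleftrightarrow> w \<in> dline a \<inter> dline b))"

end

theory Submission
  imports Defs
begin

(*
  Lift the dual lines to great circles of the sphere and take the triangle cut out by a*, b* and c*
  that lies on the positive side of a* and b* and on the negative side of c*. Writing the normal of
  p* as a combination of those of a*, b*, c* with orientation determinants as coefficients, the
  witness condition forces every further line p* to have constant sign on this triangle, so it is a
  cell of the whole arrangement; it is never marked. At the vertex a* \<inter> b*, where both lines bound the
  triangle from the same side, one can walk into the vertex along one line and out along the other;
  at a vertex on c* the two walks demand opposite signs of one triple product, so a* \<inter> b* is the
  exit vertex. Two witnesses c and d lie on opposite sides of ab; hence d* is positive on the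
  triangle of c but negative on that of d, and a* is positive on both, so the two cells are neither
  equal nor antipodal.
*)

section \<open>Intersections of hemispheres\<close>

definition open_hemispheres :: "'a::euclidean_space set \<Rightarrow> 'a set" where
  "open_hemispheres N = {v \<in> sphere 0 1. \<forall>n\<in>N. 0 < n \<bullet> v}"

definition closed_hemispheres :: "'a::euclidean_space set \<Rightarrow> 'a set" where
  "closed_hemispheres N = {v \<in> sphere 0 1. \<forall>n\<in>N. 0 \<le> n \<bullet> v}"

lemma inner_sgn_pos_iff: "0 < n \<bullet> sgn u \<longleftrightarrow> 0 < n \<bullet> u"
  and inner_sgn_nonneg_iff: "0 \<le> n \<bullet> sgn u \<longleftrightarrow> 0 \<le> n \<bullet> u"
  for n u :: "'a::real_inner"
  by (cases "u = 0"; simp add: sgn_div_norm zero_less_mult_iff zero_le_mult_iff)+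

lemma sgn_in_open_hemispheres_iff:
  "sgn u \<in> open_hemispheres N \<longleftrightarrow> u \<noteq> 0 \<and> (\<forall>n\<in>N. 0 < n \<bullet> u)"
  by (auto simp: open_hemispheres_def norm_sgn inner_sgn_pos_iff)

lemma sgn_in_closed_hemispheres_iff:
  "sgn u \<in> closed_hemispheres N \<longleftrightarrow> u \<noteq> 0 \<and> (\<forall>n\<in>N. 0 \<le> n \<bullet> u)"
  by (auto simp: closed_hemispheres_def norm_sgn inner_sgn_nonneg_iff)

lemma closed_closed_hemispheres: "closed (closed_hemispheres N)"
proof -
  have "closed_hemispheres N = sphere 0 1 \<inter> (\<Inter>n\<in>N. {v. 0 \<le> n \<bullet> v})"
    by (auto simp: closed_hemispheres_def)
  then show ?thesis
    by (auto intro!: closed_Int closed_sphere closed_INT closed_halfspace_ge)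
qed

lemma connected_open_hemispheres:
  fixes N :: "'a::euclidean_space set"
  assumes "N \<noteq> {}"
  shows "connected (open_hemispheres N)"
proof -
  define K where "K = (\<Inter>n\<in>N. {v::'a. 0 < n \<bullet> v})"
  have "convex K"
    unfolding K_def by (intro convex_INT convex_halfspace_gt)
  moreover have "\<forall>v\<in>K. v \<noteq> 0"
    using assms by (auto simp: K_def)
  ultimately have "connected (sgn ` K)"
    by (intro connected_continuous_image continuous_on_sgn continuous_on_id convex_connected)
  moreover have "sgn ` K = open_hemispheres N"
  proof
    show "sgn ` K \<subseteq> open_hemispheres N"
      using \<open>\<forall>v\<in>K. v \<noteq> 0\<close> by (auto simp: K_def sgn_in_open_hemispheres_iff)
    show "open_hemispheres N \<subseteq> sgn ` K"
    proof
      fix v assume v: "v \<in> open_hemispheres N"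
      then have "v = sgn v" and "v \<in> K"
        by (auto simp: open_hemispheres_def K_def sgn_div_norm)
      then show "v \<in> sgn ` K" by blast
    qed
  qed
  ultimately show ?thesis by simp
qed

lemma closure_open_hemispheres:
  assumes "open_hemispheres N \<noteq> {}"
  shows "closure (open_hemispheres N) = closed_hemispheres N"
proof
  show "closure (open_hemispheres N) \<subseteq> closed_hemispheres N"
    by (intro closure_minimal closed_closed_hemispheres)
       (auto simp: open_hemispheres_def closed_hemispheres_def)
next
  show "closed_hemispheres N \<subseteq> closure (open_hemispheres N)"
  proof
    fix x assume x: "x \<in> closed_hemispheres N"
    obtain y where y: "y \<in> open_hemispheres N" using assms by blast
    define z where "z = (\<lambda>s::real. (1 - s) *\<^sub>R x + s *\<^sub>R y)"
    have "x \<noteq> 0" and "sgn x = x"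
      using x by (auto simp: closed_hemispheres_def sgn_div_norm)
    have "(z \<longlongrightarrow> x) (at_right 0)"
      unfolding z_def by (auto intro!: tendsto_eq_intros)
    then have "((\<lambda>s. sgn (z s)) \<longlongrightarrow> x) (at_right 0)"
      using tendsto_sgn \<open>x \<noteq> 0\<close> \<open>sgn x = x\<close> by metis
    moreover have "\<forall>\<^sub>F s in at_right 0. sgn (z s) \<in> open_hemispheres N"
    proof -
      have "\<forall>\<^sub>F s in at_right 0. z s \<noteq> 0"
        using tendsto_imp_eventually_ne[OF \<open>(z \<longlongrightarrow> x) (at_right 0)\<close> \<open>x \<noteq> 0\<close>] .
      moreover have "\<forall>\<^sub>F s in at_right (0::real). 0 < s \<and> s < 1"
        using eventually_at_right_real[of 0 1] by simp
      ultimately show ?thesis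
      proof eventually_elim
        case (elim s)
        have "0 < n \<bullet> z s" if "n \<in> N" for n
        proof -
          have "0 \<le> n \<bullet> x" "0 < n \<bullet> y"
            using x y that by (auto simp: closed_hemispheres_def open_hemispheres_def)
          then show ?thesis
            using elim by (simp add: z_def inner_add_right add_nonneg_pos)
        qed
        then show ?case
          using elim by (simp add: sgn_in_open_hemispheres_iff)
      qed
    qed
    ultimately show "x \<in> closure (open_hemispheres N)"
      by (intro Lim_in_closed_set[OF closed_closure]) (auto elim!: eventually_mono intro: closure_subset[THEN subsetD])
  qed
qed

lemma open_hemispheres_in_components:
  fixes N :: "'a::euclidean_space set"
  assumes "N \<noteq> {}" and "open_hemispheres N \<noteq> {}" and "open_hemispheres N \<subseteq> U"
    and "U \<subseteq> sphere 0 1" and "\<And>v n. v \<in> U \<Longrightarrow> n \<in> N \<Longrightarrow> n \<bullet> v \<noteq> 0"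
  shows "open_hemispheres N \<in> components U"
  unfolding in_components_maximal
proof (intro conjI allI impI)
  fix D assume D: "D \<noteq> {} \<and> open_hemispheres N \<subseteq> D \<and> D \<subseteq> U \<and> connected D"
  obtain x where x: "x \<in> open_hemispheres N" using assms(2) by blast
  have "0 < n \<bullet> y" if "y \<in> D" "n \<in> N" for y n
  proof (rule ccontr)
    assume "\<not> 0 < n \<bullet> y"
    moreover have "x \<in> D" "0 < n \<bullet> x"
      using x D \<open>n \<in> N\<close> by (auto simp: open_hemispheres_def)
    ultimately obtain z where "z \<in> D" "n \<bullet> z = 0"
      using connected_ivt_hyperplane[of D y x n 0] D \<open>y \<in> D\<close> by force
    then show False using assms(5) D \<open>n \<in> N\<close> by blast
  qed
  then have "D \<subseteq> open_hemispheres N"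
    using D assms(4) by (auto simp: open_hemispheres_def)
  then show "D = open_hemispheres N" using D by blast
qed (use assms connected_open_hemispheres[OF assms(1)] in auto)

lemma eventually_sgn_in_closed_hemispheres:
  fixes w d :: "'a::euclidean_space"
  assumes "finite N" and "w \<noteq> 0"
    and "\<And>n. n \<in> N \<Longrightarrow> 0 < n \<bullet> w \<or> (n \<bullet> w = 0 \<and> 0 \<le> n \<bullet> d)"
  shows "\<forall>\<^sub>F t in at_right 0. sgn (w + t *\<^sub>R d) \<in> closed_hemispheres N"
proof -
  have lim: "((\<lambda>t. w + t *\<^sub>R d) \<longlongrightarrow> w) (at_right 0)"
    by (auto intro!: tendsto_eq_intros)
  have "\<forall>\<^sub>F t in at_right 0. 0 \<le> n \<bullet> (w + t *\<^sub>R d)" if "n \<in> N" for n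
    using assms(3)[OF that]
  proof
    assume "0 < n \<bullet> w"
    moreover have "((\<lambda>t. n \<bullet> (w + t *\<^sub>R d)) \<longlongrightarrow> n \<bullet> w) (at_right 0)"
      using lim by (rule tendsto_inner[OF tendsto_const])
    ultimately have "\<forall>\<^sub>F t in at_right 0. 0 < n \<bullet> (w + t *\<^sub>R d)"
      by (simp add: order_tendstoD(1))
    then show ?thesis by (rule eventually_mono) simp
  next
    assume "n \<bullet> w = 0 \<and> 0 \<le> n \<bullet> d"
    then show ?thesis
      using eventually_at_right_less[of 0]
      by (auto simp: inner_add_right elim!: eventually_mono)
  qed
  then have "\<forall>\<^sub>F t in at_right 0. \<forall>n\<in>N. 0 \<le> n \<bullet> (w + t *\<^sub>R d)"
    using assms(1) by (simp add: eventually_ball_finite)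
  moreover have "\<forall>\<^sub>F t in at_right 0. w + t *\<^sub>R d \<noteq> 0"
    using tendsto_imp_eventually_ne[OF lim assms(2)] .
  ultimately show ?thesis
    by eventually_elim (simp add: sgn_in_closed_hemispheres_iff)
qed

lemma inner_nonneg_if_eventually_sgn_in_closed_hemispheres:
  fixes w d n :: "'a::euclidean_space"
  assumes "\<forall>\<^sub>F t in at_right 0. sgn (w + t *\<^sub>R d) \<in> closed_hemispheres N"
    and "n \<in> N" and "n \<bullet> w = 0"
  shows "0 \<le> n \<bullet> d"
proof -
  have "\<forall>\<^sub>F t in at_right (0::real). 0 < t \<and> sgn (w + t *\<^sub>R d) \<in> closed_hemispheres N"
    using eventually_conj[OF eventually_at_right_less assms(1)] .
  then obtain t :: real where "0 < t" "sgn (w + t *\<^sub>R d) \<in> closed_hemispheres N"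
    using eventually_happens'[OF trivial_limit_at_right_real] by blast
  then have "0 \<le> t * (n \<bullet> d)"
    using assms(2,3) by (auto simp: sgn_in_closed_hemispheres_iff inner_add_right)
  with \<open>0 < t\<close> show ?thesis by (simp add: zero_le_mult_iff)
qed

lemma inner_cross_swap: "n1 \<bullet> cross3 w n2 = - (n2 \<bullet> cross3 w n1)"
  by (simp add: cross3_simps)

lemma inner_cross_nonzero_at_intersection:
  fixes w n1 n2 :: "real^3"
  assumes "w \<noteq> 0" and "n1 \<bullet> w = 0" and "n2 \<bullet> w = 0" and "cross3 n1 n2 \<noteq> 0"
  shows "n2 \<bullet> cross3 w n1 \<noteq> 0"
proof -
  have "cross3 w (cross3 n1 n2) = 0"
    using assms(2,3) by (simp add: Lagrange inner_commute)
  then have "w \<bullet> cross3 n1 n2 \<noteq> 0"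
    using norm_and_cross_eq_0 assms(1,4) by blast
  then show ?thesis
    using cross_triple[of w n1 n2] by (simp add: inner_commute)
qed

lemma eq_0_if_orthogonal_to_independent:
  fixes v n1 n2 n3 :: "real^3"
  assumes "n1 \<bullet> cross3 n2 n3 \<noteq> 0" and "n1 \<bullet> v = 0" and "n2 \<bullet> v = 0" and "n3 \<bullet> v = 0"
  shows "v = 0"
proof -
  have "(n1 \<bullet> cross3 n2 n3) *\<^sub>R v =
      (n1 \<bullet> v) *\<^sub>R cross3 n2 n3 + (n2 \<bullet> v) *\<^sub>R cross3 n3 n1 + (n3 \<bullet> v) *\<^sub>R cross3 n1 n2"
    by (simp add: cross3_simps forall_3)
  then show ?thesis using assms by simp
qed

lemma cross_dual_normal_eq_0_iff: "cross3 (dual_normal p) (dual_normal q) = 0 \<longleftrightarrow> p = q"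
  by (auto simp: vec_eq_iff forall_3 cross3_def dual_normal_def vector_3 prod_eq_iff)

lemma inner_dual_normal_cross: "dual_normal a \<bullet> cross3 (dual_normal b) (dual_normal c) = - orient a b c"
  by (simp add: cross3_simps dual_normal_def vector_3 orient_def)

text \<open>Cramer's rule for the normal of \<open>p*\<close> in the basis of the normals of \<open>a*, b*, c*\<close>.\<close>

lemma orient_inner_dual_normal:
  "orient a b c * (dual_normal p \<bullet> v) =
       orient p b c * (dual_normal a \<bullet> v) + orient a p c * (dual_normal b \<bullet> v)
     + orient a b p * (dual_normal c \<bullet> v)"
proof -
  have "orient a b c *\<^sub>R dual_normal p =
      orient p b c *\<^sub>R dual_normal a + orient a p c *\<^sub>R dual_normal b + orient a b p *\<^sub>R dual_normal c"
    by (simp add: vec_eq_iff forall_3 dual_normal_def vector_3 orient_def algebra_simps)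
  then show ?thesis
    by (metis inner_add_left inner_scaleR_left)
qed

section \<open>Exit vertices\<close>

lemma side_into_iff:
  "side_into p C w \<longleftrightarrow>
     (\<forall>\<^sub>F t in at_right 0. sgn (w + t *\<^sub>R - cross3 w (dual_normal p)) \<in> closure C)"
  by (auto simp: side_into_def eventually_at_right_field)

lemma side_outof_iff:
  "side_outof p C w \<longleftrightarrow>
     (\<forall>\<^sub>F t in at_right 0. sgn (w + t *\<^sub>R cross3 w (dual_normal p)) \<in> closure C)"
  by (auto simp: side_outof_def eventually_at_right_field)

lemma exit_at_vertex_of_same_side_lines:
  fixes N :: "(real^3) set"
  assumes "finite N" and "dual_normal p \<in> N" and "dual_normal q \<in> N"
    and "closure C = closed_hemispheres N"
    and "w \<in> dline p" and "w \<in> dline q"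
    and "\<And>n. n \<in> N - {dual_normal p, dual_normal q} \<Longrightarrow> 0 < n \<bullet> w"
  shows "(side_into q C w \<and> side_outof p C w) \<or> (side_into p C w \<and> side_outof q C w)"
proof -
  define np nq where "np = dual_normal p" and "nq = dual_normal q"
  have w: "w \<noteq> 0" "np \<bullet> w = 0" "nq \<bullet> w = 0"
    using assms(5,6) by (auto simp: dline_def np_def nq_def)
  have move: "\<forall>\<^sub>F t in at_right 0. sgn (w + t *\<^sub>R d) \<in> closure C"
    if "0 \<le> np \<bullet> d" and "0 \<le> nq \<bullet> d" for d
    unfolding assms(4)
  proof (rule eventually_sgn_in_closed_hemispheres[OF assms(1) w(1)])
    fix n assume "n \<in> N"
    then show "0 < n \<bullet> w \<or> (n \<bullet> w = 0 \<and> 0 \<le> n \<bullet> d)"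
      using assms(7)[of n] w that unfolding np_def nq_def by blast
  qed
  \<comment> \<open>along \<open>p*\<close> only \<open>nq\<close> changes, at rate \<open>\<plusminus>k\<close>, and vice versa; the sign of \<open>k\<close> picks the walks\<close>
  define k where "k = nq \<bullet> cross3 w np"
  have swap: "np \<bullet> cross3 w nq = - k"
    unfolding k_def by (rule inner_cross_swap)
  have "side_outof p C w" if "0 \<le> k"
    unfolding side_outof_iff np_def[symmetric]
    by (rule move) (use that in \<open>simp_all add: k_def dot_cross_self\<close>)
  moreover have "side_into q C w" if "0 \<le> k"
    unfolding side_into_iff nq_def[symmetric]
    by (rule move) (use that swap in \<open>simp_all add: dot_cross_self\<close>)
  moreover have "side_outof q C w" if "k \<le> 0"
    unfolding side_outof_iff nq_def[symmetric]
    by (rule move) (use that swap in \<open>simp_all add: dot_cross_self\<close>)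
  moreover have "side_into p C w" if "k \<le> 0"
    unfolding side_into_iff np_def[symmetric]
    by (rule move) (use that in \<open>simp_all add: k_def dot_cross_self\<close>)
  ultimately show ?thesis by linarith
qed

lemma no_exit_at_vertex_of_opposite_side_lines:
  fixes N :: "(real^3) set"
  assumes "dual_normal p \<in> N" and "- dual_normal q \<in> N" and "p \<noteq> q"
    and "closure C = closed_hemispheres N"
    and "w \<in> dline p" and "w \<in> dline q"
  shows "\<not> (side_into p C w \<and> side_outof q C w)" and "\<not> (side_into q C w \<and> side_outof p C w)"
proof -
  define np nq where "np = dual_normal p" and "nq = dual_normal q"
  have w: "w \<noteq> 0" "np \<bullet> w = 0" "nq \<bullet> w = 0"
    using assms(5,6) by (auto simp: dline_def np_def nq_def)
  define m where "m = nq \<bullet> cross3 w np"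
  have "m \<noteq> 0"
    unfolding m_def using w assms(3)
    by (intro inner_cross_nonzero_at_intersection) (auto simp: np_def nq_def cross_dual_normal_eq_0_iff)
  have swap: "np \<bullet> cross3 w nq = - m"
    unfolding m_def by (rule inner_cross_swap)
  have stays: "0 \<le> n \<bullet> d"
    if "\<forall>\<^sub>F t in at_right 0. sgn (w + t *\<^sub>R d) \<in> closure C" and "n \<in> {np, - nq}" for n d
    by (rule inner_nonneg_if_eventually_sgn_in_closed_hemispheres[of w d N])
       (use that assms(1,2,4) w in \<open>auto simp: np_def nq_def\<close>)
  have "0 \<le> m" if "side_into p C w"
    using stays[of "- cross3 w np" "- nq"] that by (simp add: side_into_iff np_def m_def)
  moreover have "m \<le> 0" if "side_outof p C w"
    using stays[of "cross3 w np" "- nq"] that by (simp add: side_outof_iff np_def m_def)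
  moreover have "0 \<le> m" if "side_into q C w"
    using stays[of "- cross3 w nq" np] that swap by (simp add: side_into_iff nq_def)
  moreover have "m \<le> 0" if "side_outof q C w"
    using stays[of "cross3 w nq" np] that swap by (simp add: side_outof_iff nq_def)
  ultimately show "\<not> (side_into p C w \<and> side_outof q C w)" and "\<not> (side_into q C w \<and> side_outof p C w)"
    using \<open>m \<noteq> 0\<close> by linarith+
qed

section \<open>Witnesses and their dual triangles\<close>

lemma exit_edge_witness_orient:
  assumes "general_position S" and "exit_edge_witness S a b c" and "p \<in> S" and "p \<notin> {a, b, c}"
  shows "orient a b p * orient p b c < 0" and "orient a b p * orient a p c < 0"
proof -
  have S: "a \<in> S" "b \<in> S" "c \<in> S" "a \<noteq> b" "a \<noteq> c" "b \<noteq> c"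
    and not_sep: "\<not> strictly_separates a p b c" "\<not> strictly_separates b p a c"
    using assms(2-4) unfolding exit_edge_witness_def by auto
  have "orient a p b \<noteq> 0" "orient a p c \<noteq> 0" "orient b p a \<noteq> 0" "orient b p c \<noteq> 0"
    using assms(1) S assms(3,4) unfolding general_position_def by auto
  moreover have "orient a p b * orient a p c \<ge> 0" "orient b p a * orient b p c \<ge> 0"
    using not_sep assms(4) unfolding strictly_separates_def by auto
  ultimately have "orient a p b * orient a p c > 0" "orient b p a * orient b p c > 0"
    by (simp_all add: order_le_less)
  moreover have "orient a p b = - orient a b p" "orient b p a = orient a b p" "orient b p c = - orient p b c"
    by (simp_all add: orient_def algebra_simps)
  ultimately show "orient a b p * orient p b c < 0" and "orient a b p * orient a p c < 0"
    by simp_all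
qed

lemma exit_edge_witnesses_opposite_sides:
  assumes "general_position S" and "exit_edge_witness S a b c" and "exit_edge_witness S a b d"
    and "c \<noteq> d"
  shows "orient a b c * orient a b d < 0"
proof -
  have "d \<in> S" "d \<notin> {a, b, c}" "c \<in> S" "c \<notin> {a, b, d}"
    using assms(2-4) unfolding exit_edge_witness_def by auto
  then have "orient a b d * orient d b c < 0" "orient a b c * orient c b d < 0"
    using exit_edge_witness_orient(1) assms(1-3) by blast+
  moreover have "orient c b d = - orient d b c"
    by (simp add: orient_def algebra_simps)
  ultimately show ?thesis
    by (auto simp: mult_less_0_iff zero_less_mult_iff)
qed

text \<open>In the affine chart \<open>Z > 0\<close> this is the region below \<open>a*\<close> and \<open>b*\<close> and above \<open>c*\<close>.\<close>

definition dual_triangle :: "pt \<Rightarrow> pt \<Rightarrow> pt \<Rightarrow> (real^3) set" where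
  "dual_triangle a b c = open_hemispheres {dual_normal a, dual_normal b, - dual_normal c}"

lemma mem_dual_triangle:
  "v \<in> dual_triangle a b c \<longleftrightarrow>
     norm v = 1 \<and> 0 < dual_normal a \<bullet> v \<and> 0 < dual_normal b \<bullet> v \<and> dual_normal c \<bullet> v < 0"
  by (auto simp: dual_triangle_def open_hemispheres_def)

lemma orient_neq_0_imp_distinct: "orient a b c \<noteq> 0 \<Longrightarrow> a \<noteq> b \<and> a \<noteq> c \<and> b \<noteq> c"
  by (auto simp: orient_def)

lemma dual_triangle_nonempty:
  assumes "orient a b c \<noteq> 0"
  shows "dual_triangle a b c \<noteq> {}"
proof -
  define na nb nc where "na = dual_normal a" and "nb = dual_normal b" and "nc = dual_normal c"
  define T where "T = na \<bullet> cross3 nb nc"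
  have "T \<noteq> 0"
    using assms by (simp add: T_def na_def nb_def nc_def inner_dual_normal_cross)
  have "nb \<bullet> cross3 nc na = T" "nc \<bullet> cross3 na nb = T"
    by (simp_all add: T_def cross3_simps)
  \<comment> \<open>combination of the dual basis with inner products \<open>T\<^sup>2, T\<^sup>2, -T\<^sup>2\<close> against \<open>na, nb, nc\<close>\<close>
  define v where "v = T *\<^sub>R (cross3 nb nc + cross3 nc na - cross3 na nb)"
  have "na \<bullet> v = T * T" "nb \<bullet> v = T * T" "nc \<bullet> v = - (T * T)"
    using \<open>nb \<bullet> cross3 nc na = T\<close> \<open>nc \<bullet> cross3 na nb = T\<close>
    by (simp_all add: v_def T_def dot_cross_self inner_add_right inner_diff_right)
  moreover have "0 < T * T"
    using \<open>T \<noteq> 0\<close> not_real_square_gt_zero by blast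
  ultimately have "sgn v \<in> dual_triangle a b c"
    by (auto simp: dual_triangle_def sgn_in_open_hemispheres_iff na_def nb_def nc_def)
  then show ?thesis by blast
qed

lemma orient_inner_dual_normal_on_dual_triangle:
  assumes "orient a b p * orient p b c < 0" and "orient a b p * orient a p c < 0"
    and "v \<in> dual_triangle a b c"
  shows "orient a b p * orient a b c * (dual_normal p \<bullet> v) < 0"
proof -
  have v: "0 < dual_normal a \<bullet> v" "0 < dual_normal b \<bullet> v" "dual_normal c \<bullet> v < 0"
    using assms(3) by (simp_all add: mem_dual_triangle)
  have "orient a b p \<noteq> 0"
    using assms(1) by auto
  then have "orient a b p * orient a b p * (dual_normal c \<bullet> v) < 0"
    using v(3) by (intro mult_pos_neg) (auto simp: zero_less_mult_iff linorder_neq_iff)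
  moreover have "orient a b p * orient p b c * (dual_normal a \<bullet> v) < 0"
    "orient a b p * orient a p c * (dual_normal b \<bullet> v) < 0"
    using assms(1,2) v(1,2) by (simp_all add: mult_neg_pos)
  moreover have "orient a b p * orient a b c * (dual_normal p \<bullet> v) =
        orient a b p * orient p b c * (dual_normal a \<bullet> v)
      + orient a b p * orient a p c * (dual_normal b \<bullet> v)
      + orient a b p * orient a b p * (dual_normal c \<bullet> v)"
    using orient_inner_dual_normal[of a b c p v] by (simp add: mult.assoc distrib_left)
  ultimately show ?thesis by linarith
qed

lemma dual_triangle_in_components:
  assumes "orient a b c \<noteq> 0" and "{a, b, c} \<subseteq> T"
    and "\<And>p v. p \<in> T \<Longrightarrow> v \<in> dual_triangle a b c \<Longrightarrow> v \<notin> dline p"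
  shows "dual_triangle a b c \<in> components (sphere 0 1 - \<Union>(dline ` T))"
  unfolding dual_triangle_def
proof (rule open_hemispheres_in_components)
  show "open_hemispheres {dual_normal a, dual_normal b, - dual_normal c} \<noteq> {}"
    using dual_triangle_nonempty[OF assms(1)] by (simp add: dual_triangle_def)
  show "open_hemispheres {dual_normal a, dual_normal b, - dual_normal c}
      \<subseteq> sphere 0 1 - \<Union>(dline ` T)"
    using assms(3) by (auto simp: dual_triangle_def open_hemispheres_def)
  show "n \<bullet> v \<noteq> 0"
    if "v \<in> sphere 0 1 - \<Union>(dline ` T)" and "n \<in> {dual_normal a, dual_normal b, - dual_normal c}"
    for v n
    using that assms(2) by (auto simp: dline_def)
qed auto

lemma not_marked_dual_triangle: "\<not> marked (dual_triangle a b c)"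
  by (auto simp: marked_def mem_dual_triangle dual_normal_def inner_vec_def sum_3)

lemma dual_triangle_exit_vertex:
  assumes "orient a b c \<noteq> 0" and "tri_vertex a b c (dual_triangle a b c) w"
  shows "exit_vertex_prop a b c (dual_triangle a b c) w \<longleftrightarrow> w \<in> dline a \<inter> dline b"
proof -
  define C N where "C = dual_triangle a b c" and "N = {dual_normal a, dual_normal b, - dual_normal c}"
  have distinct: "a \<noteq> b" "a \<noteq> c" "b \<noteq> c"
    using orient_neq_0_imp_distinct[OF assms(1)] by auto
  have closure: "closure C = closed_hemispheres N"
    using closure_open_hemispheres dual_triangle_nonempty[OF assms(1)]
    by (simp add: C_def N_def dual_triangle_def)
  have "w \<in> closure C"
    using assms(2) by (simp add: tri_vertex_def C_def)
  show ?thesis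
    unfolding C_def[symmetric]
  proof
    assume "exit_vertex_prop a b c C w"
    then obtain p q where pq: "p \<in> {a, b, c}" "q \<in> {a, b, c}" "p \<noteq> q" "w \<in> dline p" "w \<in> dline q"
      "side_into p C w" "side_outof q C w"
      unfolding exit_vertex_prop_def by blast
    have "\<not> (side_into x C w \<and> side_outof c C w) \<and> \<not> (side_into c C w \<and> side_outof x C w)"
      if "x \<in> {a, b}" "w \<in> dline x" "w \<in> dline c" for x
      using no_exit_at_vertex_of_opposite_side_lines[of x N c C w] that closure distinct
      by (auto simp: N_def)
    then have "p \<noteq> c" "q \<noteq> c"
      using pq by blast+
    then show "w \<in> dline a \<inter> dline b"
      using pq(1-5) by auto
  next
    assume w: "w \<in> dline a \<inter> dline b"
    have "dual_normal c \<bullet> w \<noteq> 0"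
    proof
      assume "dual_normal c \<bullet> w = 0"
      moreover have "dual_normal a \<bullet> cross3 (dual_normal b) (dual_normal c) \<noteq> 0"
        using assms(1) by (simp add: inner_dual_normal_cross)
      ultimately have "w = 0"
        using w eq_0_if_orthogonal_to_independent[of "dual_normal a" "dual_normal b" "dual_normal c" w]
        by (auto simp: dline_def)
      with w show False by (simp add: dline_def)
    qed
    moreover have "0 \<le> - dual_normal c \<bullet> w"
      using \<open>w \<in> closure C\<close> closure by (simp add: closed_hemispheres_def N_def)
    ultimately have "0 < n \<bullet> w" if "n \<in> N - {dual_normal a, dual_normal b}" for n
      using that by (auto simp: N_def)
    moreover have "finite N" "dual_normal a \<in> N" "dual_normal b \<in> N"
      by (simp_all add: N_def)
    ultimately have "(side_into b C w \<and> side_outof a C w) \<or> (side_into a C w \<and> side_outof b C w)"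
      using exit_at_vertex_of_same_side_lines[of N a b C w] w closure by blast
    moreover have "exit_vertex_prop a b c C w" if "side_into p C w" "side_outof q C w"
      and "{p, q} = {a, b}" for p q
      unfolding exit_vertex_prop_def
      using \<open>w \<in> closure C\<close> w distinct that by (auto simp: doubleton_eq_iff)
    ultimately show "exit_vertex_prop a b c C w"
      by (metis insert_commute)
  qed
qed

lemma witness_dual_triangle_unmarked_exit:
  assumes "general_position S" and "exit_edge_witness S a b c"
  shows "unmarked_tri_exit_ab S a b c (dual_triangle a b c)"
proof -
  have S: "{a, b, c} \<subseteq> S" and "orient a b c \<noteq> 0"
    using assms unfolding exit_edge_witness_def general_position_def by auto
  have "v \<notin> dline p" if "p \<in> S" and "v \<in> dual_triangle a b c" for p v
  proof (cases "p \<in> {a, b, c}")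
    case True
    then show ?thesis
      using that(2) by (auto simp: mem_dual_triangle dline_def)
  next
    case False
    then have "orient a b p * orient a b c * (dual_normal p \<bullet> v) < 0"
      using exit_edge_witness_orient[OF assms that(1)] that(2)
      by (intro orient_inner_dual_normal_on_dual_triangle) auto
    then show ?thesis by (auto simp: dline_def)
  qed
  then have "dual_triangle a b c \<in> components (sphere 0 1 - \<Union>(dline ` S))"
    and "dual_triangle a b c \<in> components (sphere 0 1 - \<Union>(dline ` {a, b, c}))"
    using S \<open>orient a b c \<noteq> 0\<close> by (blast intro: dual_triangle_in_components)+
  then show ?thesis
    using dual_triangle_exit_vertex[OF \<open>orient a b c \<noteq> 0\<close>] not_marked_dual_triangle
    by (simp add: unmarked_tri_exit_ab_def tri_cell_def is_cell_def Un_assoc)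
qed

theorem mainTheorem9:
  fixes S :: "(real \<times> real) set" and a b c d :: "real \<times> real"
  assumes "finite S" and "general_position S"
    and "a \<in> S" and "b \<in> S"
    and "exit_edge_witness S a b c" and "exit_edge_witness S a b d" and "c \<noteq> d"
  shows "\<exists>C D. unmarked_tri_exit_ab S a b c C \<and> unmarked_tri_exit_ab S a b d D \<and>
           C \<noteq> D \<and> C \<noteq> uminus ` D"
proof (intro exI conjI)
  let ?C = "dual_triangle a b c" and ?D = "dual_triangle a b d"
  show "unmarked_tri_exit_ab S a b c ?C" "unmarked_tri_exit_ab S a b d ?D"
    using witness_dual_triangle_unmarked_exit assms(2,5,6) by blast+
  obtain v where v: "v \<in> ?C"
    using dual_triangle_nonempty assms(2,5) unfolding exit_edge_witness_def general_position_def by blast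
  have "d \<in> S" "d \<notin> {a, b, c}"
    using assms(5-7) unfolding exit_edge_witness_def by auto
  then have "orient a b d * orient a b c * (dual_normal d \<bullet> v) < 0"
    using exit_edge_witness_orient[OF assms(2,5)] v by (intro orient_inner_dual_normal_on_dual_triangle)
  moreover have "orient a b c * orient a b d < 0"
    using exit_edge_witnesses_opposite_sides assms(2,5-7) by blast
  ultimately have "v \<notin> ?D"
    by (auto simp: mem_dual_triangle mult.commute mult_less_0_iff zero_less_mult_iff)
  then show "?C \<noteq> ?D"
    using v by blast
  show "?C \<noteq> uminus ` ?D"
  proof
    assume "?C = uminus ` ?D"
    with v have "- v \<in> ?D" by force
    with v show False by (simp add: mem_dual_triangle)
  qed
qed

end
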